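(* Let $G$ and $H$ be finitely generated groups, let $f:G\to H$ be a surjective homomorphism, and let $S=(g_1,\dots,g_n)\in\Gamma_n(G)$. Then: (1) if $\Gamma_n(H,f(S))$ has exponential growth, where $f(S)=(f(g_1),\dots,f(g_n))$, then $\Gamma_n(G,S)$ has exponential growth; (2) if some connected component of $\Gamma_m(H)$ has exponential growth, then $\Gamma_{n+m}(G,S)$ has exponential growth; (3) if $H$ has exponential Nielsen growth, then $G$ has exponential Nielsen growth.
   Context: For a group $G$, a generating $n$-tuple is $(g_1,\dots,g_n)\in G^n$ with $G=\langle g_1,\dots,g_n\rangle$. The product replacement graph $\Gamma_n(G)$ has vertices the generating $n$-tuples, with edges from $(g_1,\dots,g_n)$ to each tuple obtained by replacing $g_j$ by $g_jg_i^{\pm1}$ or $g_i^{\pm1}g_j$, for every ordered pair $i\neq j$. For $S=(g_1,\dots,g_n)\in\Gamma_n(G)$ and $m\ge0$, $S^{(m)}=(g_1,\dots,g_n,1,\dots,1)\in\Gamma_{n+m}(G)$ and $\Gamma_{n+m}(G,S)$ is the connected component of $\Gamma_{n+m}(G)$ containing $S^{(m)}$ (so $\Gamma_n(G,S)$ is the component containing $S$). For a graph $\Gamma$ and vertex $v$, $B_\Gamma(v,r)$ is the set of vertices at path distance at most $r$ from $v$; a graph has exponential growth from $v$ if $|B_\Gamma(v,r)|\ge\alpha^r$ for some $\alpha>1$ and all sufficiently large $r$; a connected graph has exponential growth if it has exponential growth from some (equivalently every) vertex. $G$ has exponential Nielsen growth if $\Gamma_n(G,S)$ has exponential growth for some $n$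 and some generating $n$-tuple $S$. *)

theory Defs
  imports "HOL-Algebra.Algebra"
begin

definition gen_tuple :: "('a, 'c) monoid_scheme \<Rightarrow> nat \<Rightarrow> 'a list \<Rightarrow> bool" where
  "gen_tuple G n S \<longleftrightarrow> length S = n \<and> set S \<subseteq> carrier G \<and> generate G (set S) = carrier G"

definition fin_gen :: "('a, 'c) monoid_scheme \<Rightarrow> bool" where
  "fin_gen G \<longleftrightarrow> (\<exists>A. finite A \<and> A \<subseteq> carrier G \<and> generate G A = carrier G)"

definition nielsen_move :: "('a, 'c) monoid_scheme \<Rightarrow> 'a list \<Rightarrow> 'a list \<Rightarrow> bool" where
  "nielsen_move G S T \<longleftrightarrow> (\<exists>i j. i < length S \<and> j < length S \<and> i \<noteq> j \<and>
     (T = S[j := S!j \<otimes>\<^bsub>G\<^esub> S!i] \<or> T = S[j := S!j \<otimes>\<^bsub>G\<^esub> inv\<^bsub>G\<^esub> (S!i)] \<or>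
      T = S[j := S!i \<otimes>\<^bsub>G\<^esub> S!j] \<or> T = S[j := inv\<^bsub>G\<^esub> (S!i) \<otimes>\<^bsub>G\<^esub> S!j]))"

definition pr_edge :: "('a, 'c) monoid_scheme \<Rightarrow> nat \<Rightarrow> 'a list \<Rightarrow> 'a list \<Rightarrow> bool" where
  "pr_edge G n S T \<longleftrightarrow> gen_tuple G n S \<and> gen_tuple G n T \<and> nielsen_move G S T"

definition pr_ball :: "('a, 'c) monoid_scheme \<Rightarrow> nat \<Rightarrow> 'a list \<Rightarrow> nat \<Rightarrow> 'a list set" where
  "pr_ball G n v r = {w. gen_tuple G n w \<and> (\<exists>k\<le>r. (pr_edge G n ^^ k) v w)}"

definition pr_component :: "('a, 'c) monoid_scheme \<Rightarrow> nat \<Rightarrow> 'a list \<Rightarrow> 'a list set" where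
  "pr_component G n v = {w. gen_tuple G n w \<and> (pr_edge G n)\<^sup>*\<^sup>* v w}"

definition exp_growth_from :: "('a, 'c) monoid_scheme \<Rightarrow> nat \<Rightarrow> 'a list \<Rightarrow> bool" where
  "exp_growth_from G n v \<longleftrightarrow>
     (\<exists>\<alpha>::real. \<alpha> > 1 \<and> (\<forall>\<^sub>F r in sequentially. \<alpha> ^ r \<le> real (card (pr_ball G n v r))))"

definition comp_exp_growth :: "('a, 'c) monoid_scheme \<Rightarrow> nat \<Rightarrow> 'a list \<Rightarrow> bool" where
  "comp_exp_growth G n S \<longleftrightarrow> (\<exists>v\<in>pr_component G n S. exp_growth_from G n v)"

definition pad :: "('a, 'c) monoid_scheme \<Rightarrow> 'a list \<Rightarrow> nat \<Rightarrow> 'a list" where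
  "pad G S m = S @ replicate m \<one>\<^bsub>G\<^esub>"

definition exp_nielsen_growth :: "('a, 'c) monoid_scheme \<Rightarrow> bool" where
  "exp_nielsen_growth G \<longleftrightarrow> (\<exists>n S. gen_tuple G n S \<and> comp_exp_growth G n S)"

end

theory Submission
  imports Defs
begin

text \<open>A Nielsen move of an image tuple \<open>f(x)\<close> is the image of the same move of \<open>x\<close>, and Nielsen
moves preserve the generated subgroup, so every path of \<open>\<Gamma>(H)\<close> starting at \<open>f(x)\<close> lifts to a
path of \<open>\<Gamma>(G)\<close> starting at \<open>x\<close>. Hence balls in \<open>\<Gamma>(G)\<close> map onto balls of the same radius in
\<open>\<Gamma>(H)\<close>, and exponential growth pulls back. This gives (1) directly and (2) after lifting a tuple
\<open>T\<close> of \<open>H\<close> to a tuple \<open>T'\<close> of \<open>G\<close>: since \<open>S\<close> already generates \<open>G\<close>, moves multiplying the padding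
entries by elements of \<open>\<langle>S\<rangle>\<close> connect \<open>S\<^sup>(\<^sup>m\<^sup>)\<close> to \<open>S T'\<close>, and moves of \<open>T\<close> lift to moves acting on
the last \<open>m\<close> entries only. (3) is (2) for a finite generating tuple \<open>S\<close> of \<open>G\<close>.\<close>

lemma nielsen_move_length: "nielsen_move G x x' \<Longrightarrow> length x' = length x"
  unfolding nielsen_move_def by auto

lemma (in group) nielsen_move_sym:
  assumes x: "set x \<subseteq> carrier G" and mv: "nielsen_move G x x'"
  shows "nielsen_move G x' x"
proof -
  obtain i j where ij: "i < length x" "j < length x" "i \<noteq> j" and
    cs: "x' = x[j := x!j \<otimes> x!i] \<or> x' = x[j := x!j \<otimes> inv (x!i)] \<or>
      x' = x[j := x!i \<otimes> x!j] \<or> x' = x[j := inv (x!i) \<otimes> x!j]"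
    using mv unfolding nielsen_move_def by blast
  have c: "x!i \<in> carrier G" "x!j \<in> carrier G" using ij x by auto
  have cancel: "inv (x!i) \<otimes> (x!i \<otimes> x!j) = x!j" "x!i \<otimes> (inv (x!i) \<otimes> x!j) = x!j"
    using c by (simp_all add: m_assoc[symmetric])
  have "x = x'[j := x'!j \<otimes> inv (x'!i)] \<or> x = x'[j := x'!j \<otimes> x'!i] \<or>
      x = x'[j := inv (x'!i) \<otimes> x'!j] \<or> x = x'[j := x'!i \<otimes> x'!j]"
    using cs ij c by (elim disjE) (simp_all add: m_assoc cancel)
  then show ?thesis
    using ij cs unfolding nielsen_move_def by (metis length_list_update)
qed

lemma (in group) set_nielsen_move_subset_generate:
  assumes x: "set x \<subseteq> carrier G" and mv: "nielsen_move G x x'"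
  shows "set x' \<subseteq> generate G (set x)"
proof -
  obtain i j c where ij: "i < length x" "j < length x" and x': "x' = x[j := c]" and
    c: "c \<in> {x!j \<otimes> x!i, x!j \<otimes> inv (x!i), x!i \<otimes> x!j, inv (x!i) \<otimes> x!j}"
    using mv unfolding nielsen_move_def by blast
  have "x!i \<in> generate G (set x)" "x!j \<in> generate G (set x)"
    using ij by (auto intro: generate.incl)
  moreover have "inv (x!i) \<in> generate G (set x)" using ij by (auto intro: generate.inv)
  ultimately have "c \<in> generate G (set x)" using c by (auto intro: generate.eng)
  then show ?thesis
    using x' set_update_subset_insert[of x j c] generate.incl[of _ "set x" G] by blast
qed

lemma (in group) generate_nielsen_move:
  assumes x: "set x \<subseteq> carrier G" and mv: "nielsen_move G x x'"
  shows "generate G (set x') = generate G (set x)"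
proof -
  have x'x: "set x' \<subseteq> generate G (set x)"
    using set_nielsen_move_subset_generate[OF x mv] .
  then have x': "set x' \<subseteq> carrier G" using generate_incl[OF x] by blast
  have xx': "set x \<subseteq> generate G (set x')"
    using set_nielsen_move_subset_generate[OF x' nielsen_move_sym[OF x mv]] .
  show ?thesis
    using generate_subgroup_incl[OF x'x generate_is_subgroup[OF x]]
      generate_subgroup_incl[OF xx' generate_is_subgroup[OF x']] by blast
qed

lemma (in group) pr_edge_if_nielsen_move:
  assumes "gen_tuple G n x" "nielsen_move G x x'"
  shows "pr_edge G n x x'"
proof -
  have "set x' \<subseteq> carrier G"
    using assms set_nielsen_move_subset_generate generate_incl unfolding gen_tuple_def by blast
  then show ?thesis
    using assms generate_nielsen_move nielsen_move_length
    unfolding pr_edge_def gen_tuple_def by metis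
qed

lemma nielsen_move_append_left:
  assumes "nielsen_move G x x'"
  shows "nielsen_move G (P @ x) (P @ x')"
proof -
  obtain i j where "i < length x" "j < length x" "i \<noteq> j" and
    "x' = x[j := x!j \<otimes>\<^bsub>G\<^esub> x!i] \<or> x' = x[j := x!j \<otimes>\<^bsub>G\<^esub> inv\<^bsub>G\<^esub> (x!i)] \<or>
      x' = x[j := x!i \<otimes>\<^bsub>G\<^esub> x!j] \<or> x' = x[j := inv\<^bsub>G\<^esub> (x!i) \<otimes>\<^bsub>G\<^esub> x!j]"
    using assms unfolding nielsen_move_def by blast
  then show ?thesis
    unfolding nielsen_move_def
    by (intro exI[of _ "length P + i"] exI[of _ "length P + j"])
       (auto simp: list_update_append nth_append)
qed

lemma (in group_hom) nielsen_move_lift: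
  assumes x: "set x \<subseteq> carrier G" and mv: "nielsen_move H (map h x) y"
  shows "\<exists>x'. nielsen_move G x x' \<and> map h x' = y"
proof -
  obtain i j where ij: "i < length x" "j < length x" "i \<noteq> j" and
    cs: "y = (map h x)[j := h (x!j) \<otimes>\<^bsub>H\<^esub> h (x!i)] \<or> y = (map h x)[j := h (x!j) \<otimes>\<^bsub>H\<^esub> inv\<^bsub>H\<^esub> h (x!i)] \<or>
     y = (map h x)[j := h (x!i) \<otimes>\<^bsub>H\<^esub> h (x!j)] \<or> y = (map h x)[j := inv\<^bsub>H\<^esub> h (x!i) \<otimes>\<^bsub>H\<^esub> h (x!j)]"
    using mv unfolding nielsen_move_def by auto
  have c: "x!i \<in> carrier G" "x!j \<in> carrier G" using ij x by auto
  have "\<exists>c \<in> {x!j \<otimes> x!i, x!j \<otimes> inv (x!i), x!i \<otimes> x!j, inv (x!i) \<otimes> x!j}. y = map h (x[j := c])"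
    using cs c by (auto simp: map_update)
  then show ?thesis
    using ij unfolding nielsen_move_def by blast
qed

lemma finite_nielsen_moves: "finite {x'. nielsen_move G x x'}"
proof -
  have "{x'. nielsen_move G x x'} \<subseteq> (\<Union>i<length x. \<Union>j<length x.
     {x[j := x!j \<otimes>\<^bsub>G\<^esub> x!i], x[j := x!j \<otimes>\<^bsub>G\<^esub> inv\<^bsub>G\<^esub> (x!i)],
      x[j := x!i \<otimes>\<^bsub>G\<^esub> x!j], x[j := inv\<^bsub>G\<^esub> (x!i) \<otimes>\<^bsub>G\<^esub> x!j]})"
    unfolding nielsen_move_def by blast
  then show ?thesis by (rule finite_subset) auto
qed

lemma finite_pr_ball: "finite (pr_ball G n v r)"
proof -
  have "finite {w. (pr_edge G n ^^ k) v w}" for k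
  proof (induction k)
    case (Suc k)
    have "{w. (pr_edge G n ^^ Suc k) v w} \<subseteq> (\<Union>u\<in>{w. (pr_edge G n ^^ k) v w}. {w. nielsen_move G u w})"
      by (auto simp: pr_edge_def)
    then show ?case using Suc finite_nielsen_moves by (meson finite_UN_I finite_subset)
  qed simp
  moreover have "pr_ball G n v r \<subseteq> (\<Union>k\<le>r. {w. (pr_edge G n ^^ k) v w})"
    unfolding pr_ball_def by auto
  ultimately show ?thesis by (meson finite_UN_I finite_atMost finite_subset)
qed

lemma relpowp_lift:
  assumes "x \<in> R"
    and lift: "\<And>x y. x \<in> R \<Longrightarrow> F (\<phi> x) y \<Longrightarrow> \<exists>x'\<in>R. E x x' \<and> \<phi> x' = y"
    and "(F ^^ k) (\<phi> x) y"
  shows "\<exists>x'\<in>R. (E ^^ k) x x' \<and> \<phi> x' = y"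
  using assms(3)
proof (induction k arbitrary: y)
  case (Suc k)
  then obtain z where z: "(F ^^ k) (\<phi> x) z" "F z y" by auto
  then obtain x1 where "x1 \<in> R" "(E ^^ k) x x1" "\<phi> x1 = z" using Suc.IH by blast
  with lift z(2) show ?case by (metis relpowp_Suc_I)
qed (use \<open>x \<in> R\<close> in auto)

lemma card_pr_ball_le_lift:
  assumes "x \<in> R" and R: "\<And>x. x \<in> R \<Longrightarrow> gen_tuple G n x"
    and lift: "\<And>x y. x \<in> R \<Longrightarrow> pr_edge H m (\<phi> x) y \<Longrightarrow> \<exists>x'\<in>R. pr_edge G n x x' \<and> \<phi> x' = y"
  shows "card (pr_ball H m (\<phi> x) r) \<le> card (pr_ball G n x r)"
proof -
  have "pr_ball H m (\<phi> x) r \<subseteq> \<phi> ` pr_ball G n x r"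
  proof
    fix w assume "w \<in> pr_ball H m (\<phi> x) r"
    then obtain k where k: "k \<le> r" "(pr_edge H m ^^ k) (\<phi> x) w"
      unfolding pr_ball_def by auto
    then obtain x' where "x' \<in> R" "(pr_edge G n ^^ k) x x'" "\<phi> x' = w"
      using relpowp_lift[where E = "pr_edge G n" and F = "pr_edge H m", OF \<open>x \<in> R\<close> lift] by blast
    then show "w \<in> \<phi> ` pr_ball G n x r" unfolding pr_ball_def using k R by blast
  qed
  then have "card (pr_ball H m (\<phi> x) r) \<le> card (\<phi> ` pr_ball G n x r)"
    by (intro card_mono finite_imageI finite_pr_ball)
  also have "\<dots> \<le> card (pr_ball G n x r)" by (intro card_image_le finite_pr_ball)
  finally show ?thesis .
qed

lemma exp_growth_from_mono:
  assumes "exp_growth_from H m w" and "\<And>r. card (pr_ball H m w r) \<le> card (pr_ball G n v r)"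
  shows "exp_growth_from G n v"
proof -
  obtain \<alpha> :: real where "\<alpha> > 1" "\<forall>\<^sub>F r in sequentially. \<alpha> ^ r \<le> real (card (pr_ball H m w r))"
    using assms(1) unfolding exp_growth_from_def by blast
  then show ?thesis
    unfolding exp_growth_from_def
    by (auto intro!: exI[of _ \<alpha>] elim!: eventually_mono intro: order_trans[OF _ of_nat_mono[OF assms(2)]])
qed

lemma comp_exp_growth_lift:
  assumes "x \<in> R" and R: "\<And>x. x \<in> R \<Longrightarrow> gen_tuple G n x"
    and lift: "\<And>x y. x \<in> R \<Longrightarrow> pr_edge H m (\<phi> x) y \<Longrightarrow> \<exists>x'\<in>R. pr_edge G n x x' \<and> \<phi> x' = y"
    and "comp_exp_growth H m (\<phi> x)"
  shows "comp_exp_growth G n x"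
proof -
  obtain w where w: "w \<in> pr_component H m (\<phi> x)" "exp_growth_from H m w"
    using assms(4) unfolding comp_exp_growth_def by blast
  then obtain k where "(pr_edge H m ^^ k) (\<phi> x) w"
    unfolding pr_component_def by (auto simp: rtranclp_power)
  then obtain v where v: "v \<in> R" "(pr_edge G n ^^ k) x v" "\<phi> v = w"
    using relpowp_lift[where E = "pr_edge G n" and F = "pr_edge H m", OF \<open>x \<in> R\<close> lift] by blast
  have "v \<in> pr_component G n x"
    unfolding pr_component_def using v R by (auto simp: rtranclp_power)
  moreover have "exp_growth_from G n v"
    using exp_growth_from_mono w(2) card_pr_ball_le_lift[OF v(1) R lift] v(3) by blast
  ultimately show ?thesis unfolding comp_exp_growth_def by blast
qed

lemma comp_exp_growth_rtranclp:
  assumes "(pr_edge G n)\<^sup>*\<^sup>* x y" and "comp_exp_growth G n y"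
  shows "comp_exp_growth G n x"
  using assms unfolding comp_exp_growth_def pr_component_def
  by (auto intro: rtranclp_trans)

lemma gen_tuple_rtranclp_pr_edge:
  assumes "(pr_edge G n)\<^sup>*\<^sup>* x y" and "gen_tuple G n x"
  shows "gen_tuple G n y"
  using assms by (induction rule: rtranclp_induct) (auto simp: pr_edge_def)

lemma (in group_hom) comp_exp_growth_append_lift:
  assumes "gen_tuple G n (P @ x)" and "comp_exp_growth H (length x) (map h x)"
  shows "comp_exp_growth G n (P @ x)"
proof -
  define R where "R = {P @ z | z. gen_tuple G n (P @ z)}"
  have R: "gen_tuple G n u" if "u \<in> R" for u
    using that unfolding R_def by blast
  have lift: "\<exists>u'\<in>R. pr_edge G n u u' \<and> map h (drop (length P) u') = y"
    if "u \<in> R" and e: "pr_edge H (length x) (map h (drop (length P) u)) y" for u y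
  proof -
    obtain z where u: "u = P @ z" "gen_tuple G n (P @ z)" using \<open>u \<in> R\<close> unfolding R_def by blast
    then have "set z \<subseteq> carrier G" unfolding gen_tuple_def by auto
    then obtain z' where z': "nielsen_move G z z'" "map h z' = y"
      using nielsen_move_lift e u(1) unfolding pr_edge_def by fastforce
    have "pr_edge G n (P @ z) (P @ z')"
      using G.pr_edge_if_nielsen_move[OF u(2) nielsen_move_append_left[OF z'(1)]] .
    moreover then have "P @ z' \<in> R" unfolding R_def pr_edge_def by blast
    ultimately show ?thesis using u(1) z'(2) by (intro bexI[of _ "P @ z'"]) simp_all
  qed
  have x: "P @ x \<in> R" using assms(1) unfolding R_def by blast
  have growth: "comp_exp_growth H (length x) (map h (drop (length P) (P @ x)))"
    using assms(2) by simp
  show ?thesis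
    by (rule comp_exp_growth_lift[where \<phi> = "\<lambda>u. map h (drop (length P) u)", OF x R lift growth])
qed

lemma (in group) gen_tuple_append:
  assumes "generate G (set P) = carrier G" "set P \<subseteq> carrier G" "set Q \<subseteq> carrier G"
  shows "gen_tuple G (length P + length Q) (P @ Q)"
proof -
  have "generate G (set P) \<subseteq> generate G (set (P @ Q))" by (rule mono_generate) simp
  moreover have "generate G (set (P @ Q)) \<subseteq> carrier G" using assms by (intro generate_incl) auto
  ultimately show ?thesis using assms unfolding gen_tuple_def by auto
qed

lemma (in group) pr_edge_mult_entry:
  assumes "gen_tuple G n x" "i < p" "p < n"
  shows "pr_edge G n x (x[p := x!p \<otimes> x!i])" "pr_edge G n x (x[p := x!p \<otimes> inv (x!i)])"
proof -
  have "length x = n" using assms(1) unfolding gen_tuple_def by simp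
  then have "nielsen_move G x (x[p := x!p \<otimes> x!i])" "nielsen_move G x (x[p := x!p \<otimes> inv (x!i)])"
    unfolding nielsen_move_def using assms(2,3) by (intro exI[of _ i] exI[of _ p]; auto)+
  then show "pr_edge G n x (x[p := x!p \<otimes> x!i])" "pr_edge G n x (x[p := x!p \<otimes> inv (x!i)])"
    using pr_edge_if_nielsen_move assms(1) by blast+
qed

lemma (in group) rtranclp_pr_edge_mult_generate:
  assumes "g \<in> generate G (set (take p x))" "gen_tuple G n x" "p < n"
  shows "(pr_edge G n)\<^sup>*\<^sup>* x (x[p := x!p \<otimes> g])"
proof -
  have "(pr_edge G n)\<^sup>*\<^sup>* x (x[p := x!p \<otimes> g])"
    if "g \<in> generate G (set P)" "take p x = P" "gen_tuple G n x" for g P x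
    using that
  proof (induction g arbitrary: x rule: generate.induct)
    case one
    then have "x!p \<in> carrier G" using \<open>p < n\<close> unfolding gen_tuple_def by auto
    then show ?case by simp
  next
    case (incl h)
    then obtain i where "i < p" "h = x!i"
      by (metis in_set_conv_nth length_take min_less_iff_conj nth_take)
    then show ?case using pr_edge_mult_entry(1) incl.prems(2) \<open>p < n\<close> by blast
  next
    case (inv h)
    then obtain i where "i < p" "h = x!i"
      by (metis in_set_conv_nth length_take min_less_iff_conj nth_take)
    then show ?case using pr_edge_mult_entry(2) inv.prems(2) \<open>p < n\<close> by blast
  next
    case (eng h1 h2)
    have x: "set x \<subseteq> carrier G" "length x = n" using eng.prems(2) unfolding gen_tuple_def by auto
    have "set P \<subseteq> carrier G" by (metis x(1) eng.prems(1) set_take_subset order_trans)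
    then have "generate G (set P) \<subseteq> carrier G" by (rule generate_incl)
    then have h: "h1 \<in> carrier G" "h2 \<in> carrier G"
      using \<open>h1 \<in> generate G (set P)\<close> \<open>h2 \<in> generate G (set P)\<close> by auto
    define x1 where "x1 = x[p := x!p \<otimes> h1]"
    have r1: "(pr_edge G n)\<^sup>*\<^sup>* x x1" unfolding x1_def using eng.IH(1) eng.prems by blast
    have "take p x1 = P" unfolding x1_def using eng.prems(1) by simp
    moreover have "gen_tuple G n x1" using gen_tuple_rtranclp_pr_edge[OF r1 eng.prems(2)] .
    ultimately have r2: "(pr_edge G n)\<^sup>*\<^sup>* x1 (x1[p := x1!p \<otimes> h2])" using eng.IH(2) by blast
    have "x!p \<in> carrier G" using x \<open>p < n\<close> by auto
    then have "x1[p := x1!p \<otimes> h2] = x[p := x!p \<otimes> (h1 \<otimes> h2)]"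
      unfolding x1_def using x(2) h \<open>p < n\<close> by (simp add: m_assoc)
    then show ?case using rtranclp_trans[OF r1 r2] by simp
  qed
  then show ?thesis using assms by blast
qed

lemma (in group) gen_tuple_pad:
  assumes "gen_tuple G n S"
  shows "gen_tuple G (n + m) (pad G S m)"
  using assms gen_tuple_append[of S "replicate m \<one>"]
  unfolding gen_tuple_def pad_def by (simp add: set_replicate_conv_if)

lemma (in group) rtranclp_pr_edge_replicate_one:
  assumes "generate G (set P) = carrier G" "set P \<subseteq> carrier G" "set U \<subseteq> carrier G"
  shows "(pr_edge G (length P + length U))\<^sup>*\<^sup>* (P @ replicate (length U) \<one>) (P @ U)"
  using assms
proof (induction U arbitrary: P)
  case (Cons u U)
  let ?N = "length P + length (u # U)" and ?x = "P @ \<one> # replicate (length U) \<one>"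
  have u: "u \<in> carrier G" using Cons.prems by simp
  have "gen_tuple G ?N ?x"
    using gen_tuple_append[of P "\<one> # replicate (length U) \<one>"] Cons.prems
    by (simp add: set_replicate_conv_if)
  moreover have "u \<in> generate G (set (take (length P) ?x))" using Cons.prems(1) u by simp
  ultimately have "(pr_edge G ?N)\<^sup>*\<^sup>* ?x (?x[length P := ?x!length P \<otimes> u])"
    by (intro rtranclp_pr_edge_mult_generate) auto
  also have "?x[length P := ?x!length P \<otimes> u] = (P @ [u]) @ replicate (length U) \<one>"
    using u by (simp add: list_update_append)
  also have "(pr_edge G ?N)\<^sup>*\<^sup>* \<dots> ((P @ [u]) @ U)"
    using Cons.IH[of "P @ [u]"] Cons.prems gen_tuple_append[of P "[u]"] unfolding gen_tuple_def by auto
  finally show ?case by simp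
qed simp

lemma ex_map_preimage:
  assumes "set ys \<subseteq> f ` A"
  shows "\<exists>xs. set xs \<subseteq> A \<and> map f xs = ys"
  using assms
proof (induction ys)
  case (Cons y ys)
  then obtain x xs where "x \<in> A" "f x = y" "set xs \<subseteq> A" "map f xs = ys" by auto
  then show ?case by (intro exI[of _ "x # xs"]) simp
qed simp

lemma (in group_hom) comp_exp_growth_pad:
  assumes surj: "h ` carrier G = carrier H" and S: "gen_tuple G n S"
    and T: "gen_tuple H m T" "comp_exp_growth H m T"
  shows "comp_exp_growth G (n + m) (pad G S m)"
proof -
  obtain T' where T': "set T' \<subseteq> carrier G" "map h T' = T"
    using ex_map_preimage[of T h "carrier G"] T(1) surj unfolding gen_tuple_def by auto
  have S': "set S \<subseteq> carrier G" "generate G (set S) = carrier G" "length S = n"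
    using S unfolding gen_tuple_def by auto
  have "length T' = m" using T'(2) T(1) unfolding gen_tuple_def by auto
  then have "gen_tuple G (n + m) (S @ T')"
    using G.gen_tuple_append[OF S'(2,1) T'(1)] S'(3) by simp
  then have "comp_exp_growth G (n + m) (S @ T')"
    using comp_exp_growth_append_lift T' T(2) \<open>length T' = m\<close> by blast
  moreover have "(pr_edge G (n + m))\<^sup>*\<^sup>* (pad G S m) (S @ T')"
    using G.rtranclp_pr_edge_replicate_one[OF S'(2,1) T'(1)] S'(3) \<open>length T' = m\<close>
    unfolding pad_def by simp
  ultimately show ?thesis using comp_exp_growth_rtranclp by blast
qed

lemma (in group_hom) exp_nielsen_growth_pullback:
  assumes "h ` carrier G = carrier H" and "fin_gen G" and "exp_nielsen_growth H"
  shows "exp_nielsen_growth G"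
proof -
  obtain m T where T: "gen_tuple H m T" "comp_exp_growth H m T"
    using assms(3) unfolding exp_nielsen_growth_def by blast
  obtain A where A: "finite A" "A \<subseteq> carrier G" "generate G A = carrier G"
    using assms(2) unfolding fin_gen_def by blast
  then obtain S where S: "gen_tuple G (length S) S"
    using finite_list[OF A(1)] unfolding gen_tuple_def by auto
  show ?thesis
    using G.gen_tuple_pad[OF S] comp_exp_growth_pad[OF assms(1) S T]
    unfolding exp_nielsen_growth_def by blast
qed

theorem proposition3p5:
  fixes G :: "('a, 'c) monoid_scheme" and H :: "('b, 'd) monoid_scheme"
    and f :: "'a \<Rightarrow> 'b" and S :: "'a list" and n :: nat
  assumes "group G" and "group H" and "fin_gen G" and "fin_gen H"
    and "f \<in> hom G H" and "f ` carrier G = carrier H"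
    and "gen_tuple G n S"
  shows "(comp_exp_growth H n (map f S) \<longrightarrow> comp_exp_growth G n S)
    \<and> (\<forall>m. (\<exists>T. gen_tuple H m T \<and> comp_exp_growth H m T) \<longrightarrow> comp_exp_growth G (n + m) (pad G S m))
    \<and> (exp_nielsen_growth H \<longrightarrow> exp_nielsen_growth G)"
proof (intro conjI impI allI)
  interpret group_hom G H f
    using assms(1,2,5) by (simp add: group_hom_def group_hom_axioms_def)
  show "comp_exp_growth G n S" if "comp_exp_growth H n (map f S)"
    using comp_exp_growth_append_lift[of n "[]" S] assms(7) that
    unfolding gen_tuple_def by auto
  show "comp_exp_growth G (n + m) (pad G S m)" if "\<exists>T. gen_tuple H m T \<and> comp_exp_growth H m T" for m
    using that comp_exp_growth_pad[OF assms(6,7)] by blast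
  show "exp_nielsen_growth G" if "exp_nielsen_growth H"
    using exp_nielsen_growth_pullback assms(3,6) that by blast
qed

end
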